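(* Let $(\mathcal P,\cdot,[-,\dots,-])$ be a finite-dimensional solvable Poisson $n$-Lie algebra over an algebraically closed field of characteristic zero. Then $\operatorname{Nil}(\mathcal P)$ coincides with the nilradical of the $n$-Lie algebra $\mathcal P_L=(\mathcal P,[-,\dots,-])$.
   Context: A Poisson $n$-Lie algebra is a commutative associative algebra $(\mathcal P,\cdot)$ with an $n$-linear skew-symmetric bracket satisfying the fundamental identity $[x_1,\dots,x_{n-1},[y_1,\dots,y_n]]=\sum_{i=1}^n[y_1,\dots,[x_1,\dots,x_{n-1},y_i],\dots,y_n]$ and the Leibniz rule $[y\cdot z,x_2,\dots,x_n]=y\cdot[z,x_2,\dots,x_n]+z\cdot[y,x_2,\dots,x_n]$. Products/brackets of subspaces are linear spans. An ideal $\mathcal I$ of $\mathcal P$ satisfies $\mathcal P\cdot\mathcal I\subseteq\mathcal I$, $[\mathcal I,\mathcal P,\dots,\mathcal P]\subseteq\mathcal I$; it is nilpotent if $\mathcal I^s=0$ for some $s$, where $\mathcal I^1=\mathcal I$, $\mathcal I^{k+1}=[\mathcal I^k,\mathcal I,\mathcal P,\dots,\mathcal P]+\mathcal I^k\cdot\mathcal I$. $\operatorname{Nil}(\mathcal P)$ is the maximal nilpotent ideal of $\mathcal P$. The nilradical of $\mathcal P_L$ is its maximal nilpotent ideal, where an ideal $N$ of $\mathcal P_L$ is nilpotent if $N^s=0$ with $N^1=N$, $N^{k+1}=[N^k,N,\mathcal P,\dots,\mathcal P]$. $\mathcal P$ is solvable if $\mathcal P^{(s)}=0$ for some $s$, with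 $\mathcal P^{(1)}=\mathcal P$, $\mathcal P^{(k+1)}=[\mathcal P^{(k)},\mathcal P^{(k)},\mathcal P,\dots,\mathcal P]+\mathcal P^{(k)}\cdot\mathcal P^{(k)}$. *)

theory Defs
  imports Main "HOL-Computational_Algebra.Polynomial"
begin

definition alg_closed :: "'k::field itself \<Rightarrow> bool" where
  "alg_closed _ \<longleftrightarrow> (\<forall>p :: 'k poly. 0 < degree p \<longrightarrow> (\<exists>x. poly p x = 0))"

definition fin_dim_vs :: "('k::field \<Rightarrow> 'v::ab_group_add \<Rightarrow> 'v) \<Rightarrow> bool" where
  "fin_dim_vs sc \<longleftrightarrow> (\<exists>B. finite_dimensional_vector_space sc B)"

definition multilinear :: "('k::field \<Rightarrow> 'v::ab_group_add \<Rightarrow> 'v) \<Rightarrow> nat \<Rightarrow> ('v list \<Rightarrow> 'v) \<Rightarrow> bool" where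
  "multilinear sc n br \<longleftrightarrow>
     (\<forall>xs i a b u w. length xs = n \<longrightarrow> i < n \<longrightarrow>
        br (xs[i := sc a u + sc b w]) = sc a (br (xs[i := u])) + sc b (br (xs[i := w])))"

definition skew_symmetric :: "nat \<Rightarrow> ('v::ab_group_add list \<Rightarrow> 'v) \<Rightarrow> bool" where
  "skew_symmetric n br \<longleftrightarrow>
     (\<forall>xs i j. length xs = n \<longrightarrow> i < j \<longrightarrow> j < n \<longrightarrow>
        br (xs[i := xs ! j, j := xs ! i]) = - br xs)"

definition fundamental_identity :: "nat \<Rightarrow> ('v::ab_group_add list \<Rightarrow> 'v) \<Rightarrow> bool" where
  "fundamental_identity n br \<longleftrightarrow>
     (\<forall>xs ys. length xs = n - 1 \<longrightarrow> length ys = n \<longrightarrow>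
        br (xs @ [br ys]) = (\<Sum>i<n. br (ys[i := br (xs @ [ys ! i])])))"

definition leibniz_rule :: "nat \<Rightarrow> ('v::ab_group_add \<Rightarrow> 'v \<Rightarrow> 'v) \<Rightarrow> ('v list \<Rightarrow> 'v) \<Rightarrow> bool" where
  "leibniz_rule n mul br \<longleftrightarrow>
     (\<forall>y z xs. length xs = n - 1 \<longrightarrow>
        br (mul y z # xs) = mul y (br (z # xs)) + mul z (br (y # xs)))"

definition comm_assoc_algebra :: "('k::field \<Rightarrow> 'v::ab_group_add \<Rightarrow> 'v) \<Rightarrow> ('v \<Rightarrow> 'v \<Rightarrow> 'v) \<Rightarrow> bool" where
  "comm_assoc_algebra sc mul \<longleftrightarrow>
     (\<forall>x y. mul x y = mul y x) \<and>
     (\<forall>x y z. mul (mul x y) z = mul x (mul y z)) \<and>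
     (\<forall>a b u w z. mul (sc a u + sc b w) z = sc a (mul u z) + sc b (mul w z))"

definition poisson_nlie :: "('k::field \<Rightarrow> 'v::ab_group_add \<Rightarrow> 'v) \<Rightarrow> nat \<Rightarrow> ('v \<Rightarrow> 'v \<Rightarrow> 'v) \<Rightarrow> ('v list \<Rightarrow> 'v) \<Rightarrow> bool" where
  "poisson_nlie sc n mul br \<longleftrightarrow>
     vector_space sc \<and> 2 \<le> n \<and> comm_assoc_algebra sc mul \<and>
     multilinear sc n br \<and> skew_symmetric n br \<and> fundamental_identity n br \<and> leibniz_rule n mul br"

definition br_sets :: "('k::field \<Rightarrow> 'v::ab_group_add \<Rightarrow> 'v) \<Rightarrow> ('v list \<Rightarrow> 'v) \<Rightarrow> 'v set list \<Rightarrow> 'v set" where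
  "br_sets sc br Ss = module.span sc {br xs | xs. list_all2 (\<in>) xs Ss}"

definition mul_sets :: "('k::field \<Rightarrow> 'v::ab_group_add \<Rightarrow> 'v) \<Rightarrow> ('v \<Rightarrow> 'v \<Rightarrow> 'v) \<Rightarrow> 'v set \<Rightarrow> 'v set \<Rightarrow> 'v set" where
  "mul_sets sc mul A B = module.span sc {mul a b | a b. a \<in> A \<and> b \<in> B}"

definition sum_sets :: "('k::field \<Rightarrow> 'v::ab_group_add \<Rightarrow> 'v) \<Rightarrow> 'v set \<Rightarrow> 'v set \<Rightarrow> 'v set" where
  "sum_sets sc A B = module.span sc (A \<union> B)"

definition poisson_ideal :: "('k::field \<Rightarrow> 'v::ab_group_add \<Rightarrow> 'v) \<Rightarrow> nat \<Rightarrow> ('v \<Rightarrow> 'v \<Rightarrow> 'v) \<Rightarrow> ('v list \<Rightarrow> 'v) \<Rightarrow> 'v set \<Rightarrow> bool" where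
  "poisson_ideal sc n mul br I \<longleftrightarrow>
     module.subspace sc I \<and> mul_sets sc mul UNIV I \<subseteq> I \<and>
     br_sets sc br (I # replicate (n - 1) UNIV) \<subseteq> I"

definition lie_ideal :: "('k::field \<Rightarrow> 'v::ab_group_add \<Rightarrow> 'v) \<Rightarrow> nat \<Rightarrow> ('v list \<Rightarrow> 'v) \<Rightarrow> 'v set \<Rightarrow> bool" where
  "lie_ideal sc n br I \<longleftrightarrow>
     module.subspace sc I \<and> br_sets sc br (I # replicate (n - 1) UNIV) \<subseteq> I"

(* poisson_pow ... I k is I^(k+1):  I^1 = I,
   I^(k+1) = [I^k, I, P, ..., P] + I^k \<cdot> I *)
fun poisson_pow :: "('k::field \<Rightarrow> 'v::ab_group_add \<Rightarrow> 'v) \<Rightarrow> nat \<Rightarrow> ('v \<Rightarrow> 'v \<Rightarrow> 'v) \<Rightarrow> ('v list \<Rightarrow> 'v) \<Rightarrow> 'v set \<Rightarrow> nat \<Rightarrow> 'v set" where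
  "poisson_pow sc n mul br I 0 = I"
| "poisson_pow sc n mul br I (Suc k) =
     sum_sets sc (br_sets sc br (poisson_pow sc n mul br I k # I # replicate (n - 2) UNIV))
                 (mul_sets sc mul (poisson_pow sc n mul br I k) I)"

(* lie_pow ... N k is N^(k+1):  N^1 = N, N^(k+1) = [N^k, N, P, ..., P] *)
fun lie_pow :: "('k::field \<Rightarrow> 'v::ab_group_add \<Rightarrow> 'v) \<Rightarrow> nat \<Rightarrow> ('v list \<Rightarrow> 'v) \<Rightarrow> 'v set \<Rightarrow> nat \<Rightarrow> 'v set" where
  "lie_pow sc n br N 0 = N"
| "lie_pow sc n br N (Suc k) = br_sets sc br (lie_pow sc n br N k # N # replicate (n - 2) UNIV)"

(* derived_pow ... k is P^(k+1): P^(1) = P,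
   P^(k+1) = [P^(k), P^(k), P, ..., P] + P^(k) \<cdot> P^(k) *)
fun derived_pow :: "('k::field \<Rightarrow> 'v::ab_group_add \<Rightarrow> 'v) \<Rightarrow> nat \<Rightarrow> ('v \<Rightarrow> 'v \<Rightarrow> 'v) \<Rightarrow> ('v list \<Rightarrow> 'v) \<Rightarrow> nat \<Rightarrow> 'v set" where
  "derived_pow sc n mul br 0 = UNIV"
| "derived_pow sc n mul br (Suc k) =
     sum_sets sc (br_sets sc br (derived_pow sc n mul br k # derived_pow sc n mul br k # replicate (n - 2) UNIV))
                 (mul_sets sc mul (derived_pow sc n mul br k) (derived_pow sc n mul br k))"

definition poisson_solvable :: "('k::field \<Rightarrow> 'v::ab_group_add \<Rightarrow> 'v) \<Rightarrow> nat \<Rightarrow> ('v \<Rightarrow> 'v \<Rightarrow> 'v) \<Rightarrow> ('v list \<Rightarrow> 'v) \<Rightarrow> bool" where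
  "poisson_solvable sc n mul br \<longleftrightarrow> (\<exists>s. derived_pow sc n mul br s = {0})"

definition poisson_nilpotent_ideal :: "('k::field \<Rightarrow> 'v::ab_group_add \<Rightarrow> 'v) \<Rightarrow> nat \<Rightarrow> ('v \<Rightarrow> 'v \<Rightarrow> 'v) \<Rightarrow> ('v list \<Rightarrow> 'v) \<Rightarrow> 'v set \<Rightarrow> bool" where
  "poisson_nilpotent_ideal sc n mul br I \<longleftrightarrow>
     poisson_ideal sc n mul br I \<and> (\<exists>s. poisson_pow sc n mul br I s = {0})"

definition lie_nilpotent_ideal :: "('k::field \<Rightarrow> 'v::ab_group_add \<Rightarrow> 'v) \<Rightarrow> nat \<Rightarrow> ('v list \<Rightarrow> 'v) \<Rightarrow> 'v set \<Rightarrow> bool" where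
  "lie_nilpotent_ideal sc n br N \<longleftrightarrow>
     lie_ideal sc n br N \<and> (\<exists>s. lie_pow sc n br N s = {0})"

definition is_Nil :: "('k::field \<Rightarrow> 'v::ab_group_add \<Rightarrow> 'v) \<Rightarrow> nat \<Rightarrow> ('v \<Rightarrow> 'v \<Rightarrow> 'v) \<Rightarrow> ('v list \<Rightarrow> 'v) \<Rightarrow> 'v set \<Rightarrow> bool" where
  "is_Nil sc n mul br N \<longleftrightarrow>
     poisson_nilpotent_ideal sc n mul br N \<and>
     (\<forall>I. poisson_nilpotent_ideal sc n mul br I \<longrightarrow> I \<subseteq> N)"

definition is_nilradical :: "('k::field \<Rightarrow> 'v::ab_group_add \<Rightarrow> 'v) \<Rightarrow> nat \<Rightarrow> ('v list \<Rightarrow> 'v) \<Rightarrow> 'v set \<Rightarrow> bool" where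
  "is_nilradical sc n br N \<longleftrightarrow>
     lie_nilpotent_ideal sc n br N \<and>
     (\<forall>I. lie_nilpotent_ideal sc n br I \<longrightarrow> I \<subseteq> N)"

end

theory Submission
  imports Defs
begin

(* Let N be the nilradical of the n-Lie algebra P_L; it exists in finite dimension because the
   sum of two nilpotent Lie ideals I, J is nilpotent (a long bracket in I + J lands in I^a \<inter> J^b
   with a + b large).  Solvability makes the commutative algebra (P, \<cdot>) nilpotent: a product of
   2^S elements lies in P^(S).  Give a product of factors x_j \<in> N^(a_j), where N^0 = P, the weight
   \<Sum>(a_j + 1).  By the Leibniz rule, bracketing with N or with P \<cdot> N raises the weight, and an
   element of large weight vanishes, being either a long product or having a factor deep in the
   lower central series.  Hence N + P \<cdot> N is a nilpotent Lie ideal, so P \<cdot> N \<subseteq> N by maximality,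
   and the same weight bound makes N nilpotent as a Poisson ideal.  Conversely every nilpotent
   Poisson ideal is a nilpotent Lie ideal and so lies in N. *)

lemma list_all2_mem_replicate_UNIV: "list_all2 (\<in>) ws (replicate m UNIV) \<longleftrightarrow> length ws = m"
  by (auto simp: list_all2_conv_all_nth)

lemma list_all2_mem_Cons_replicate_UNIV:
  "list_all2 (\<in>) xs (S # replicate m UNIV) \<longleftrightarrow> (\<exists>x ws. xs = x # ws \<and> x \<in> S \<and> length ws = m)"
  by (cases xs) (auto simp: list_all2_mem_replicate_UNIV)

lemma list_all2_mem_Cons_Cons_replicate_UNIV:
  "list_all2 (\<in>) xs (S # T # replicate m UNIV) \<longleftrightarrow>
    (\<exists>x y zs. xs = x # y # zs \<and> x \<in> S \<and> y \<in> T \<and> length zs = m)"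
  by (cases xs; cases "tl xs") (auto simp: list_all2_mem_replicate_UNIV)

locale poisson_nlie_alg =
  fixes sc :: "'k::field \<Rightarrow> 'v::ab_group_add \<Rightarrow> 'v"
    and n :: nat and mul :: "'v \<Rightarrow> 'v \<Rightarrow> 'v" and br :: "'v list \<Rightarrow> 'v"
  assumes poisson_nlie: "poisson_nlie sc n mul br"

sublocale poisson_nlie_alg \<subseteq> vector_space sc
  using poisson_nlie by (simp add: poisson_nlie_def)

context poisson_nlie_alg
begin

lemma arity_ge_2: "2 \<le> n"
  using poisson_nlie by (simp add: poisson_nlie_def)

lemma mul_commute: "mul x y = mul y x"
  using poisson_nlie unfolding poisson_nlie_def comm_assoc_algebra_def by blast

lemma mul_assoc: "mul (mul x y) z = mul x (mul y z)"
  using poisson_nlie unfolding poisson_nlie_def comm_assoc_algebra_def by blast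

lemma mul_linear_left: "mul (sc a u + sc b w) z = sc a (mul u z) + sc b (mul w z)"
  using poisson_nlie unfolding poisson_nlie_def comm_assoc_algebra_def by blast

lemma bracket_linear:
  "length xs = n \<Longrightarrow> i < n \<Longrightarrow>
    br (xs[i := sc a u + sc b w]) = sc a (br (xs[i := u])) + sc b (br (xs[i := w]))"
  using poisson_nlie by (simp add: poisson_nlie_def multilinear_def)

lemma bracket_swap:
  "length xs = n \<Longrightarrow> i < j \<Longrightarrow> j < n \<Longrightarrow> br (xs[i := xs ! j, j := xs ! i]) = - br xs"
  using poisson_nlie by (simp add: poisson_nlie_def skew_symmetric_def)

lemma bracket_fundamental_identity:
  "length xs = n - 1 \<Longrightarrow> length ys = n \<Longrightarrow>
    br (xs @ [br ys]) = (\<Sum>i<n. br (ys[i := br (xs @ [ys ! i])]))"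
  using poisson_nlie by (simp add: poisson_nlie_def fundamental_identity_def)

lemma bracket_mul_left:
  "length xs = n - 1 \<Longrightarrow> br (mul y z # xs) = mul y (br (z # xs)) + mul z (br (y # xs))"
  using poisson_nlie by (simp add: poisson_nlie_def leibniz_rule_def)

lemma mul_add_left: "mul (u + w) z = mul u z + mul w z"
  using mul_linear_left[of 1 u 1 w z] by simp

lemma mul_scale_left: "mul (sc a u) z = sc a (mul u z)"
  using mul_linear_left[of a u 0 u z] by simp

lemma mul_zero_left [simp]: "mul 0 z = 0"
  using mul_linear_left[of 0 z 0 z z] by simp

lemma mul_zero_right [simp]: "mul z 0 = 0"
  using mul_commute mul_zero_left by metis

lemma bracket_add:
  "length xs = n \<Longrightarrow> i < n \<Longrightarrow> br (xs[i := u + w]) = br (xs[i := u]) + br (xs[i := w])"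
  using bracket_linear[of xs i 1 u 1 w] by simp

lemma bracket_scale: "length xs = n \<Longrightarrow> i < n \<Longrightarrow> br (xs[i := sc a u]) = sc a (br (xs[i := u]))"
  using bracket_linear[of xs i a u 0 u] by simp

lemma bracket_zero: "length xs = n \<Longrightarrow> i < n \<Longrightarrow> br (xs[i := 0]) = 0"
  using bracket_linear[of xs i 0 0 0 0] by simp

lemma bracket_zero_first: "length ws = n - 1 \<Longrightarrow> br (0 # ws) = 0"
  using bracket_zero[of "0 # ws" 0] arity_ge_2 by simp

lemma bracket_swap_first_two: "length zs = n - 2 \<Longrightarrow> br (y # x # zs) = - br (x # y # zs)"
  using bracket_swap[of "x # y # zs" 0 1] arity_ge_2 by simp

lemma bracket_slot_in_subspace:
  assumes "length xs = n" "i < n" "x \<in> span S" "subspace T"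
    and "\<And>s. s \<in> S \<Longrightarrow> br (xs[i := s]) \<in> T"
  shows "br (xs[i := x]) \<in> T"
proof -
  have "subspace {x. br (xs[i := x]) \<in> T}"
    using assms(1,2,4) unfolding subspace_def by (auto simp: bracket_zero bracket_add bracket_scale)
  then show ?thesis
    using span_induct[OF assms(3), of "\<lambda>x. br (xs[i := x]) \<in> T"] assms(5) by auto
qed

lemma mul_left_in_subspace:
  assumes "x \<in> span S" "subspace T" "\<And>s. s \<in> S \<Longrightarrow> mul s y \<in> T"
  shows "mul x y \<in> T"
proof -
  have "subspace {x. mul x y \<in> T}"
    using assms(2) unfolding subspace_def by (auto simp: mul_add_left mul_scale_left)
  then show ?thesis using span_induct[OF assms(1), of "\<lambda>x. mul x y \<in> T"] assms(3) by auto
qed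

lemma bracket_first_two_in_subspace:
  assumes "subspace T" "x \<in> span G" "k \<in> span K" "length zs = n - 2"
    and "\<And>g h. g \<in> G \<Longrightarrow> h \<in> K \<Longrightarrow> br (g # h # zs) \<in> T"
  shows "br (x # k # zs) \<in> T"
proof -
  have len: "length (x # k # zs) = n" for x k using assms(4) arity_ge_2 by simp
  have "br (g # k # zs) \<in> T" if "g \<in> G" for g
    using bracket_slot_in_subspace[OF len, of 1 k K] assms(1,3,5) that arity_ge_2 by simp
  then show ?thesis
    using bracket_slot_in_subspace[OF len, of 0 x G] assms(1,2) arity_ge_2 by simp
qed

section \<open>Lie ideals and the lower central series\<close>

lemma lie_ideal_iff:
  "lie_ideal sc n br S \<longleftrightarrow> subspace S \<and> (\<forall>x\<in>S. \<forall>ws. length ws = n - 1 \<longrightarrow> br (x # ws) \<in> S)"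
proof -
  have "br_sets sc br (S # replicate (n - 1) UNIV) \<subseteq> S \<longleftrightarrow>
      (\<forall>x\<in>S. \<forall>ws. length ws = n - 1 \<longrightarrow> br (x # ws) \<in> S)" if "subspace S"
  proof
    assume "br_sets sc br (S # replicate (n - 1) UNIV) \<subseteq> S"
    then show "\<forall>x\<in>S. \<forall>ws. length ws = n - 1 \<longrightarrow> br (x # ws) \<in> S"
      unfolding br_sets_def list_all2_mem_Cons_replicate_UNIV by (blast intro: span_base)
  next
    assume "\<forall>x\<in>S. \<forall>ws. length ws = n - 1 \<longrightarrow> br (x # ws) \<in> S"
    then show "br_sets sc br (S # replicate (n - 1) UNIV) \<subseteq> S"
      unfolding br_sets_def list_all2_mem_Cons_replicate_UNIV
      by (intro span_minimal[OF _ that]) blast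
  qed
  then show ?thesis unfolding lie_ideal_def by blast
qed

lemma lie_ideal_spanI:
  assumes "\<And>g ws. g \<in> G \<Longrightarrow> length ws = n - 1 \<Longrightarrow> br (g # ws) \<in> span G"
  shows "lie_ideal sc n br (span G)"
proof -
  have "br (x # ws) \<in> span G" if "x \<in> span G" "length ws = n - 1" for x ws
    using bracket_slot_in_subspace[of "x # ws" 0 x G "span G"] that assms arity_ge_2 by simp
  then show ?thesis unfolding lie_ideal_iff by simp
qed

lemma lie_ideal_bracket_mem:
  assumes "lie_ideal sc n br S" "length xs = n" "i < n" "xs ! i \<in> S"
  shows "br xs \<in> S"
proof (cases i)
  case 0
  then show ?thesis using assms arity_ge_2 unfolding lie_ideal_iff by (cases xs) auto
next
  case (Suc j)
  let ?ys = "xs[0 := xs ! i, i := xs ! 0]"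
  have len: "length ?ys = n" using assms by simp
  have "?ys = xs ! i # tl ?ys" using assms Suc by (cases xs) auto
  moreover have "length (tl ?ys) = n - 1" using len by simp
  ultimately have "br ?ys \<in> S" using assms(1,4) unfolding lie_ideal_iff by metis
  moreover have "?ys[0 := ?ys ! i, i := ?ys ! 0] = xs"
    using assms Suc by (intro nth_equalityI) (auto simp: nth_list_update)
  ultimately show ?thesis
    using bracket_swap[OF len, of 0 i] assms(1,3) Suc unfolding lie_ideal_iff
    by (metis subspace_neg minus_minus zero_less_Suc)
qed

lemma lie_ideal_zero: "lie_ideal sc n br {0}"
  unfolding lie_ideal_iff using bracket_zero_first by simp

lemma lie_ideal_UNIV: "lie_ideal sc n br UNIV"
  unfolding lie_ideal_iff by simp

lemma subspace_lie_pow: "subspace N \<Longrightarrow> subspace (lie_pow sc n br N k)"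
  by (cases k) (auto simp: br_sets_def)

lemma bracket_mem_lie_pow_Suc:
  "x \<in> lie_pow sc n br N k \<Longrightarrow> y \<in> N \<Longrightarrow> length zs = n - 2 \<Longrightarrow>
    br (x # y # zs) \<in> lie_pow sc n br N (Suc k)"
  by (auto simp: br_sets_def list_all2_mem_Cons_Cons_replicate_UNIV intro!: span_base)

lemma lie_pow_subset_filtration:
  assumes "X \<subseteq> F 0" "\<And>j. subspace (F (Suc j))"
    and "\<And>j x y zs. x \<in> F j \<Longrightarrow> y \<in> X \<Longrightarrow> length zs = n - 2 \<Longrightarrow> br (x # y # zs) \<in> F (Suc j)"
  shows "lie_pow sc n br X j \<subseteq> F j"
proof (induction j)
  case 0
  then show ?case using assms(1) by simp
next
  case (Suc j)
  then show ?case
    unfolding lie_pow.simps br_sets_def list_all2_mem_Cons_Cons_replicate_UNIV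
    using assms(2,3) by (intro span_minimal) blast+
qed

lemma lie_pow_eq_zero_mono:
  assumes "lie_pow sc n br N s = {0}" "s \<le> k"
  shows "lie_pow sc n br N k = {0}"
  using assms(2)
proof (induction k rule: dec_induct)
  case base
  then show ?case using assms(1) .
next
  case (step k)
  have "br (0 # y # zs) = 0" if "length zs = n - 2" for y zs
    using bracket_zero_first[of "y # zs"] that arity_ge_2 by simp
  then have "lie_pow sc n br N (Suc k) \<subseteq> {0}"
    unfolding lie_pow.simps br_sets_def list_all2_mem_Cons_Cons_replicate_UNIV step.IH
    by (intro span_minimal) auto
  then show ?case by (auto simp: br_sets_def span_zero)
qed

lemma lie_nilpotent_idealI:
  assumes "lie_ideal sc n br X" "lie_pow sc n br X k \<subseteq> {0}"
  shows "lie_nilpotent_ideal sc n br X"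
proof -
  have "0 \<in> lie_pow sc n br X k"
    using assms(1) subspace_lie_pow subspace_0 unfolding lie_ideal_def by blast
  then show ?thesis unfolding lie_nilpotent_ideal_def using assms by blast
qed

lemma bracket_first_mem_if_last_mem:
  assumes "subspace T" "length ws = n - 1" "\<And>vs. length vs = n - 1 \<Longrightarrow> br (vs @ [s]) \<in> T"
  shows "br (s # ws) \<in> T"
proof -
  obtain m where m: "n = Suc (Suc m)" using arity_ge_2 by (metis add_2_eq_Suc le_Suc_ex)
  then obtain us l where ws: "ws = us @ [l]" and us: "length us = m"
    using assms(2) by (metis diff_Suc_1 length_Suc_conv_rev)
  let ?xs = "l # us @ [s]"
  have len: "length ?xs = n" using us m by simp
  have "br ?xs \<in> T" using assms(3)[of "l # us"] us m by simp
  moreover have "?xs[0 := ?xs ! (n - 1), n - 1 := ?xs ! 0] = s # ws"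
    using ws us m list_update_length[of us s "[]" l] by (simp add: nth_append)
  ultimately show ?thesis
    using bracket_swap[OF len, of 0 "n - 1"] assms(1) m
    by (metis subspace_neg diff_Suc_1 lessI zero_less_Suc)
qed

lemma bracket_last_generator_mem_lie_pow:
  assumes N: "lie_ideal sc n br N" and Nk: "lie_ideal sc n br (lie_pow sc n br N k)"
    and y: "y \<in> lie_pow sc n br N k" and m: "m \<in> N"
    and zs: "length zs = n - 2" and vs: "length vs = n - 1"
  shows "br (vs @ [br (y # m # zs)]) \<in> lie_pow sc n br N (Suc k)"
proof -
  let ?ys = "y # m # zs"
  have len: "length ?ys = n" using zs arity_ge_2 by simp
  have last: "br (vs @ [t]) \<in> S" if "lie_ideal sc n br S" "t \<in> S" for S t
    using lie_ideal_bracket_mem[OF that(1), of "vs @ [t]" "n - 1"] vs arity_ge_2 that(2)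
    by (simp add: nth_append)
  have "br (vs @ [br ?ys]) = (\<Sum>i<n. br (?ys[i := br (vs @ [?ys ! i])]))"
    using bracket_fundamental_identity[OF vs len] .
  also have "\<dots> \<in> lie_pow sc n br N (Suc k)"
  proof (rule subspace_sum)
    show "subspace (lie_pow sc n br N (Suc k))" by (simp add: br_sets_def)
    fix i assume "i \<in> {..<n}"
    consider "i = 0" | "i = 1" | j where "i = Suc (Suc j)" by (metis One_nat_def not0_implies_Suc)
    then show "br (?ys[i := br (vs @ [?ys ! i])]) \<in> lie_pow sc n br N (Suc k)"
    proof cases
      case 1
      then show ?thesis using bracket_mem_lie_pow_Suc[OF last[OF Nk y] m zs] by simp
    next
      case 2
      then show ?thesis using bracket_mem_lie_pow_Suc[OF y last[OF N m] zs] by simp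
    next
      case 3
      then show ?thesis
        using bracket_mem_lie_pow_Suc[OF y m, of "zs[j := br (vs @ [?ys ! i])]"] zs by simp
    qed
  qed
  finally show ?thesis .
qed

lemma lie_ideal_lie_pow:
  assumes N: "lie_ideal sc n br N"
  shows "lie_ideal sc n br (lie_pow sc n br N k)"
proof (induction k)
  case 0
  then show ?case using N by simp
next
  case (Suc k)
  let ?G = "{br xs |xs. list_all2 (\<in>) xs (lie_pow sc n br N k # N # replicate (n - 2) UNIV)}"
  have "br (g # ws) \<in> span ?G" if "g \<in> ?G" "length ws = n - 1" for g ws
  proof -
    obtain y m zs where g: "g = br (y # m # zs)"
      and "y \<in> lie_pow sc n br N k" "m \<in> N" "length zs = n - 2"
      using \<open>g \<in> ?G\<close> unfolding list_all2_mem_Cons_Cons_replicate_UNIV by blast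
    then have "br (vs @ [g]) \<in> span ?G" if "length vs = n - 1" for vs
      using bracket_last_generator_mem_lie_pow[OF N Suc.IH] that by (simp add: br_sets_def)
    then show ?thesis using bracket_first_mem_if_last_mem[OF subspace_span that(2)] by blast
  qed
  then show ?case unfolding lie_pow.simps br_sets_def by (rule lie_ideal_spanI)
qed

(* The lower central series N^a = lower_central N a, extended by N^0 = P. *)
fun lower_central :: "'v set \<Rightarrow> nat \<Rightarrow> 'v set" where
  "lower_central N 0 = UNIV"
| "lower_central N (Suc k) = lie_pow sc n br N k"

lemma lie_ideal_lower_central: "lie_ideal sc n br N \<Longrightarrow> lie_ideal sc n br (lower_central N a)"
  by (cases a) (simp_all add: lie_ideal_lie_pow lie_ideal_UNIV)

lemma bracket_mem_lower_central_Suc: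
  assumes N: "lie_ideal sc n br N" and x: "x \<in> lower_central N a" and y: "y \<in> N"
    and zs: "length zs = n - 2"
  shows "br (x # y # zs) \<in> lower_central N (Suc a)"
proof (cases a)
  case 0
  then show ?thesis using lie_ideal_bracket_mem[OF N, of "x # y # zs" 1] zs arity_ge_2 y by simp
next
  case (Suc k)
  then show ?thesis using bracket_mem_lie_pow_Suc[of x N k y zs] x y zs by simp
qed

lemma lower_central_eq_zero:
  assumes "lie_pow sc n br N s = {0}" "s < a"
  shows "lower_central N a = {0}"
  using assms lie_pow_eq_zero_mono by (cases a) auto

section \<open>Existence of the nilradical\<close>

definition joint_filtration :: "'v set \<Rightarrow> 'v set \<Rightarrow> nat \<Rightarrow> 'v set" where
  "joint_filtration I J w = {x. \<exists>a b. x \<in> lower_central I a \<and> x \<in> lower_central J b \<and> w \<le> a + b}"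

lemma bracket_mem_joint_filtration_Suc:
  assumes I: "lie_ideal sc n br I" and J: "lie_ideal sc n br J"
    and x: "x \<in> joint_filtration I J w" and y: "y \<in> I \<union> J" and zs: "length zs = n - 2"
  shows "br (x # y # zs) \<in> joint_filtration I J (Suc w)"
proof -
  obtain a b where a: "x \<in> lower_central I a" and b: "x \<in> lower_central J b" and w: "w \<le> a + b"
    using x by (auto simp: joint_filtration_def)
  have len: "length (y # zs) = n - 1" using zs arity_ge_2 by simp
  have Ia: "br (x # y # zs) \<in> lower_central I a"
    using lie_ideal_lower_central[OF I, of a] a len unfolding lie_ideal_iff by blast
  have Jb: "br (x # y # zs) \<in> lower_central J b"
    using lie_ideal_lower_central[OF J, of b] b len unfolding lie_ideal_iff by blast
  show ?thesis using y
  proof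
    assume "y \<in> I"
    then have "br (x # y # zs) \<in> lower_central I (Suc a)"
      by (rule bracket_mem_lower_central_Suc[OF I a _ zs])
    then show ?thesis
      using Jb w unfolding joint_filtration_def by (intro CollectI exI[of _ "Suc a"] exI[of _ b]) simp
  next
    assume "y \<in> J"
    then have "br (x # y # zs) \<in> lower_central J (Suc b)"
      by (rule bracket_mem_lower_central_Suc[OF J b _ zs])
    then show ?thesis
      using Ia w unfolding joint_filtration_def by (intro CollectI exI[of _ a] exI[of _ "Suc b"]) simp
  qed
qed

lemma lie_pow_span_union_subset:
  assumes I: "lie_ideal sc n br I" and J: "lie_ideal sc n br J"
  shows "lie_pow sc n br (span (I \<union> J)) j \<subseteq> span (joint_filtration I J (Suc j))"
proof (rule lie_pow_subset_filtration)
  have "x \<in> joint_filtration I J 1" if "x \<in> I" for x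
    using that unfolding joint_filtration_def by (intro CollectI exI[of _ 1] exI[of _ 0]) simp
  moreover have "x \<in> joint_filtration I J 1" if "x \<in> J" for x
    using that unfolding joint_filtration_def by (intro CollectI exI[of _ 0] exI[of _ 1]) simp
  ultimately show "span (I \<union> J) \<subseteq> span (joint_filtration I J (Suc 0))" by (intro span_mono) auto
  show "br (x # y # zs) \<in> span (joint_filtration I J (Suc (Suc j)))"
    if "x \<in> span (joint_filtration I J (Suc j))" "y \<in> span (I \<union> J)" "length zs = n - 2" for j x y zs
  proof (rule bracket_first_two_in_subspace[OF subspace_span that])
    show "br (g # h # zs) \<in> span (joint_filtration I J (Suc (Suc j)))"
      if "g \<in> joint_filtration I J (Suc j)" "h \<in> I \<union> J" for g h
      by (rule span_base, rule bracket_mem_joint_filtration_Suc[OF I J that \<open>length zs = n - 2\<close>])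
  qed
qed simp

lemma joint_filtration_eq_zero:
  assumes "lie_pow sc n br I s = {0}" "lie_pow sc n br J t = {0}" "s + t + 2 \<le> w"
  shows "joint_filtration I J w \<subseteq> {0}"
proof
  fix x assume "x \<in> joint_filtration I J w"
  then obtain a b where "x \<in> lower_central I a" "x \<in> lower_central J b" "w \<le> a + b"
    by (auto simp: joint_filtration_def)
  moreover have "s < a \<or> t < b" using assms(3) \<open>w \<le> a + b\<close> by linarith
  ultimately show "x \<in> {0}"
    using lower_central_eq_zero[OF assms(1), of a] lower_central_eq_zero[OF assms(2), of b] by blast
qed

lemma lie_nilpotent_ideal_span_union:
  assumes "lie_nilpotent_ideal sc n br I" "lie_nilpotent_ideal sc n br J"
  shows "lie_nilpotent_ideal sc n br (span (I \<union> J))"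
proof -
  obtain s t where I: "lie_ideal sc n br I" "lie_pow sc n br I s = {0}"
    and J: "lie_ideal sc n br J" "lie_pow sc n br J t = {0}"
    using assms unfolding lie_nilpotent_ideal_def by blast
  have "lie_ideal sc n br (span (I \<union> J))"
  proof (rule lie_ideal_spanI)
    fix x and ws :: "'v list" assume "x \<in> I \<union> J" "length ws = n - 1"
    then have "br (x # ws) \<in> I \<union> J" using I(1) J(1) unfolding lie_ideal_iff by blast
    then show "br (x # ws) \<in> span (I \<union> J)" by (rule span_base)
  qed
  moreover have "span (joint_filtration I J (Suc (s + t + 2))) \<subseteq> {0}"
    by (rule span_minimal[OF joint_filtration_eq_zero[OF I(2) J(2)]]) simp_all
  then have "lie_pow sc n br (span (I \<union> J)) (s + t + 2) \<subseteq> {0}"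
    using lie_pow_span_union_subset[OF I(1) J(1), of "s + t + 2"] by blast
  ultimately show ?thesis by (rule lie_nilpotent_idealI)
qed

lemma lie_nilradical_exists:
  assumes "finite_dimensional_vector_space sc B"
  shows "\<exists>N. is_nilradical sc n br N"
proof -
  interpret fd: finite_dimensional_vector_space sc B by (rule assms)
  let ?D = "{dim S | S. lie_nilpotent_ideal sc n br S}"
  have "?D \<subseteq> {..fd.dimension}"
  proof
    fix d assume "d \<in> ?D"
    then obtain S where "d = dim S" by blast
    then show "d \<in> {..fd.dimension}" using fd.dim_subset_UNIV[of S] by simp
  qed
  then have fin: "finite ?D" by (rule finite_subset) simp
  have "lie_nilpotent_ideal sc n br {0}"
    using lie_nilpotent_idealI[OF lie_ideal_zero, of 0] by simp
  then have "?D \<noteq> {}" by blast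
  then have "Max ?D \<in> ?D" by (rule Max_in[OF fin])
  then obtain N where N: "lie_nilpotent_ideal sc n br N" "dim N = Max ?D" by auto
  have "I \<subseteq> N" if I: "lie_nilpotent_ideal sc n br I" for I
  proof -
    let ?M = "span (N \<union> I)"
    have "lie_nilpotent_ideal sc n br ?M" by (rule lie_nilpotent_ideal_span_union[OF N(1) I])
    then have "dim ?M \<in> ?D" by blast
    then have "dim ?M \<le> dim N" using Max_ge[OF fin] N(2) by simp
    moreover have "subspace N" using N(1) unfolding lie_nilpotent_ideal_def lie_ideal_def by blast
    ultimately have "N = ?M"
      using fd.subspace_dim_equal[of N ?M] span_superset[of "N \<union> I"] by blast
    then show ?thesis using span_superset by blast
  qed
  then show ?thesis unfolding is_nilradical_def using N(1) by blast
qed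

lemma poisson_pow_subset_filtration:
  assumes "X \<subseteq> F 0" "\<And>j. subspace (F (Suc j))"
    and "\<And>j x y zs. x \<in> F j \<Longrightarrow> y \<in> X \<Longrightarrow> length zs = n - 2 \<Longrightarrow> br (x # y # zs) \<in> F (Suc j)"
    and "\<And>j x y. x \<in> F j \<Longrightarrow> y \<in> X \<Longrightarrow> mul x y \<in> F (Suc j)"
  shows "poisson_pow sc n mul br X j \<subseteq> F j"
proof (induction j)
  case 0
  then show ?case using assms(1) by simp
next
  case (Suc j)
  have "br_sets sc br (poisson_pow sc n mul br X j # X # replicate (n - 2) UNIV) \<subseteq> F (Suc j)"
    unfolding br_sets_def list_all2_mem_Cons_Cons_replicate_UNIV
    using Suc.IH assms(2,3) by (intro span_minimal) blast+
  moreover have "mul_sets sc mul (poisson_pow sc n mul br X j) X \<subseteq> F (Suc j)"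
    unfolding mul_sets_def using Suc.IH assms(2,4) by (intro span_minimal) blast+
  ultimately show ?case
    unfolding poisson_pow.simps sum_sets_def using assms(2) by (intro span_minimal) auto
qed

lemma subspace_poisson_pow: "subspace N \<Longrightarrow> subspace (poisson_pow sc n mul br N k)"
  by (cases k) (auto simp: sum_sets_def)

lemma lie_pow_subset_poisson_pow: "lie_pow sc n br X j \<subseteq> poisson_pow sc n mul br X j"
proof (rule lie_pow_subset_filtration)
  show "br (x # y # zs) \<in> poisson_pow sc n mul br X (Suc j)"
    if "x \<in> poisson_pow sc n mul br X j" "y \<in> X" "length zs = n - 2" for j x y zs
    using that
    unfolding poisson_pow.simps sum_sets_def br_sets_def list_all2_mem_Cons_Cons_replicate_UNIV
    by (blast intro: span_base)
qed (auto simp: sum_sets_def)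

lemma lie_nilpotent_if_poisson_nilpotent:
  assumes "poisson_nilpotent_ideal sc n mul br I"
  shows "lie_nilpotent_ideal sc n br I"
proof -
  obtain t where "poisson_ideal sc n mul br I" "poisson_pow sc n mul br I t = {0}"
    using assms unfolding poisson_nilpotent_ideal_def by blast
  then show ?thesis
    using lie_pow_subset_poisson_pow[of I t]
    by (intro lie_nilpotent_idealI[of I t]) (auto simp: poisson_ideal_def lie_ideal_def)
qed

section \<open>Solvability makes the product nilpotent\<close>

(* assoc_pow i is the set of products of i + 1 elements, indexed like poisson_pow. *)
fun assoc_pow :: "nat \<Rightarrow> 'v set" where
  "assoc_pow 0 = UNIV"
| "assoc_pow (Suc i) = {mul p x | p x. x \<in> assoc_pow i}"

lemma mul_mem_assoc_pow:
  "x \<in> assoc_pow i \<Longrightarrow> y \<in> assoc_pow j \<Longrightarrow> mul x y \<in> assoc_pow (Suc (i + j))"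
proof (induction i arbitrary: x)
  case 0
  then show ?case by auto
next
  case (Suc i)
  then obtain p x' where "x = mul p x'" "x' \<in> assoc_pow i" by auto
  then show ?case using Suc.IH[of x'] Suc.prems mul_assoc by auto
qed

lemma assoc_pow_SucD:
  "x \<in> assoc_pow (Suc (i + j)) \<Longrightarrow> \<exists>a b. a \<in> assoc_pow i \<and> b \<in> assoc_pow j \<and> x = mul a b"
proof (induction i arbitrary: x)
  case 0
  then show ?case by auto
next
  case (Suc i)
  then obtain p y where "x = mul p y" "y \<in> assoc_pow (Suc (i + j))" by auto
  with Suc.IH obtain a b where "a \<in> assoc_pow i" "b \<in> assoc_pow j" "y = mul a b" by blast
  then show ?case using \<open>x = mul p y\<close> mul_assoc by (intro exI[of _ "mul p a"] exI[of _ b]) auto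
qed

lemma assoc_pow_Suc_subset: "assoc_pow (Suc i) \<subseteq> assoc_pow i"
proof (induction i)
  case (Suc i)
  then show ?case by (auto 0 3)
qed simp

lemma assoc_pow_antimono: "i \<le> j \<Longrightarrow> assoc_pow j \<subseteq> assoc_pow i"
  by (induction j rule: dec_induct) (use assoc_pow_Suc_subset in blast)+

lemma assoc_pow_subset_derived_pow: "assoc_pow (2 ^ k - 1) \<subseteq> derived_pow sc n mul br k"
proof (induction k)
  case 0
  then show ?case by simp
next
  case (Suc k)
  show ?case
  proof
    fix x assume "x \<in> assoc_pow (2 ^ Suc k - 1)"
    moreover have "2 ^ Suc k - 1 = Suc ((2 ^ k - 1) + (2 ^ k - 1))"
    proof -
      have "(1::nat) \<le> 2 ^ k" by simp
      then show ?thesis by (simp only: power_Suc mult_2)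
    qed
    ultimately obtain a b
      where "a \<in> assoc_pow (2 ^ k - 1)" "b \<in> assoc_pow (2 ^ k - 1)" "x = mul a b"
      using assoc_pow_SucD by metis
    then have "x \<in> mul_sets sc mul (derived_pow sc n mul br k) (derived_pow sc n mul br k)"
      using Suc.IH unfolding mul_sets_def by (intro span_base) blast
    then show "x \<in> derived_pow sc n mul br (Suc k)"
      by (simp add: sum_sets_def span_base)
  qed
qed

lemma assoc_pow_eq_zero:
  assumes "derived_pow sc n mul br S = {0}" "2 ^ S \<le> Suc r"
  shows "assoc_pow r \<subseteq> {0}"
proof -
  have "2 ^ S - 1 \<le> r" using assms(2) by linarith
  then show ?thesis using assoc_pow_antimono assoc_pow_subset_derived_pow[of S] assms(1) by blast
qed

section \<open>Weighted products\<close>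

inductive weighted :: "'v set \<Rightarrow> nat \<Rightarrow> 'v \<Rightarrow> bool" for N where
  factor: "x \<in> lower_central N a \<Longrightarrow> w \<le> Suc a \<Longrightarrow> weighted N w x"
| product: "weighted N w\<^sub>1 x \<Longrightarrow> weighted N w\<^sub>2 y \<Longrightarrow> w \<le> w\<^sub>1 + w\<^sub>2 \<Longrightarrow> weighted N w (mul x y)"

lemma weighted_mono:
  assumes "weighted N w x" "v \<le> w"
  shows "weighted N v x"
  using assms(1)
proof cases
  case (factor a)
  then show ?thesis using weighted.factor[of x N a v] assms(2) by simp
next
  case (product w\<^sub>1 x\<^sub>1 w\<^sub>2 x\<^sub>2)
  then show ?thesis using weighted.product[of N w\<^sub>1 x\<^sub>1 w\<^sub>2 x\<^sub>2 v] assms(2) by simp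
qed

lemma weighted_one: "weighted N 1 x"
  using weighted.factor[of x N 0] by simp

lemma weighted_two: "x \<in> N \<Longrightarrow> weighted N 2 x"
  using weighted.factor[of x N 1] by simp

lemma weighted_zero_or_long_product:
  assumes "weighted N w x" "lie_pow sc n br N s = {0}"
  shows "x = 0 \<or> (\<exists>r. x \<in> assoc_pow r \<and> w \<le> Suc r * Suc s)"
  using assms(1)
proof (induction rule: weighted.induct)
  case (factor x a w)
  then show ?case
    using lower_central_eq_zero[OF assms(2), of a] by (cases "s < a") (auto intro: exI[of _ 0])
next
  case (product w\<^sub>1 x w\<^sub>2 y w)
  show ?case
  proof (cases "x = 0 \<or> y = 0")
    case False
    then obtain r\<^sub>1 r\<^sub>2 where "x \<in> assoc_pow r\<^sub>1" "w\<^sub>1 \<le> Suc r\<^sub>1 * Suc s"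
      and "y \<in> assoc_pow r\<^sub>2" "w\<^sub>2 \<le> Suc r\<^sub>2 * Suc s"
      using product.IH by blast
    moreover have "w \<le> Suc (Suc (r\<^sub>1 + r\<^sub>2)) * Suc s"
      using product.hyps(3) calculation(2,4) by (simp add: algebra_simps)
    ultimately show ?thesis using mul_mem_assoc_pow by blast
  qed auto
qed

lemma weighted_eq_zero:
  assumes "weighted N w x" "lie_pow sc n br N s = {0}" "derived_pow sc n mul br S = {0}"
    and "2 ^ S * Suc s \<le> w"
  shows "x = 0"
proof (rule ccontr)
  assume "x \<noteq> 0"
  then obtain r where "x \<in> assoc_pow r" "w \<le> Suc r * Suc s"
    using weighted_zero_or_long_product[OF assms(1,2)] by blast
  moreover from this have "2 ^ S \<le> Suc r"
    using assms(4) by (meson le_trans mult_le_cancel2 zero_less_Suc)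
  ultimately show False using assoc_pow_eq_zero[OF assms(3)] \<open>x \<noteq> 0\<close> by blast
qed

lemma mul_mem_span_weighted:
  assumes "z \<in> span {z. weighted N u z}" "weighted N v x" "w \<le> u + v"
  shows "mul z x \<in> span {z. weighted N w z}"
proof (rule mul_left_in_subspace[OF assms(1) subspace_span])
  show "mul s x \<in> span {z. weighted N w z}" if "s \<in> {z. weighted N u z}" for s
    using that weighted.product[of N u s v x w] assms(2,3) by (simp add: span_base)
qed

definition multiples :: "'v set \<Rightarrow> 'v set" where
  "multiples N = {mul p y | p y. y \<in> N}"

lemma bracket_weighted_factor_multiple:
  assumes N: "lie_ideal sc n br N" and x: "x \<in> lower_central N a" and zs: "length zs = n - 2"
    and m: "m \<in> N"
  shows "br (x # mul p m # zs) \<in> span {z. weighted N (Suc (Suc a)) z}"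
proof -
  have len: "length (x # zs) = n - 1" using zs arity_ge_2 by simp
  have expand: "br (x # mul p m # zs) = - (mul p (br (m # x # zs)) + mul m (br (p # x # zs)))"
    using bracket_swap_first_two[OF zs, of x] bracket_mul_left[OF len, of p m] by simp
  have "br (x # m # zs) \<in> lower_central N (Suc a)"
    using bracket_mem_lower_central_Suc[OF N x m zs] .
  then have "br (m # x # zs) \<in> lower_central N (Suc a)"
    using bracket_swap_first_two[OF zs, of m x] lie_ideal_lower_central[OF N, of "Suc a"]
    unfolding lie_ideal_def by (metis subspace_neg)
  then have "weighted N (Suc (Suc a)) (mul p (br (m # x # zs)))"
    using weighted.product[OF weighted_one weighted.factor[of _ N "Suc a" "Suc (Suc a)"]] by simp
  moreover have "br (p # x # zs) \<in> lower_central N a"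
    using lie_ideal_bracket_mem[OF lie_ideal_lower_central[OF N], of "p # x # zs" 1] x zs arity_ge_2
    by simp
  then have "weighted N (Suc (Suc a)) (mul m (br (p # x # zs)))"
    using weighted.product[OF weighted_two[OF m] weighted.factor[of _ N a "Suc a"]] by simp
  ultimately show ?thesis unfolding expand by (intro span_neg span_add span_base) auto
qed

lemma bracket_weighted_Suc:
  assumes N: "lie_ideal sc n br N" and x: "weighted N w x" and zs: "length zs = n - 2"
    and y: "y \<in> N \<union> multiples N"
  shows "br (x # y # zs) \<in> span {z. weighted N (Suc w) z}"
  using x
proof (induction rule: weighted.induct)
  case (factor x a w)
  have "br (x # y # zs) \<in> span {z. weighted N (Suc (Suc a)) z}"
  proof (cases "y \<in> N")
    case True
    then have "br (x # y # zs) \<in> lower_central N (Suc a)"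
      by (rule bracket_mem_lower_central_Suc[OF N factor(1) _ zs])
    then show ?thesis by (intro span_base CollectI weighted.factor[of _ N "Suc a"]) simp_all
  next
    case False
    then obtain p m where "y = mul p m" "m \<in> N" using y by (auto simp: multiples_def)
    then show ?thesis using bracket_weighted_factor_multiple[OF N factor(1) zs] by simp
  qed
  moreover have "span {z. weighted N (Suc (Suc a)) z} \<subseteq> span {z. weighted N (Suc w) z}"
    using factor(2) weighted_mono[of N "Suc (Suc a)" _ "Suc w"] by (intro span_mono) auto
  ultimately show ?case by blast
next
  case (product w\<^sub>1 x\<^sub>1 w\<^sub>2 x\<^sub>2 w)
  have len: "length (y # zs) = n - 1" using zs arity_ge_2 by simp
  have "mul (br (x\<^sub>2 # y # zs)) x\<^sub>1 \<in> span {z. weighted N (Suc w) z}"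
    using mul_mem_span_weighted[OF product.IH(2) product.hyps(1)] product.hyps(3) by simp
  moreover have "mul (br (x\<^sub>1 # y # zs)) x\<^sub>2 \<in> span {z. weighted N (Suc w) z}"
    using mul_mem_span_weighted[OF product.IH(1) product.hyps(2)] product.hyps(3) by simp
  ultimately show ?case
    unfolding bracket_mul_left[OF len] by (metis mul_commute span_add)
qed

lemma span_weighted_eq_zero:
  assumes "lie_pow sc n br N s = {0}" "derived_pow sc n mul br S = {0}" "2 ^ S * Suc s \<le> w"
  shows "span {z. weighted N w z} \<subseteq> {0}"
  using weighted_eq_zero[OF _ assms] by (intro span_minimal) auto

lemma lie_ideal_span_multiples:
  assumes N: "lie_ideal sc n br N"
  shows "lie_ideal sc n br (span (N \<union> multiples N))"
proof (rule lie_ideal_spanI)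
  fix x and ws :: "'v list" assume x: "x \<in> N \<union> multiples N" and ws: "length ws = n - 1"
  show "br (x # ws) \<in> span (N \<union> multiples N)"
  proof (cases "x \<in> N")
    case True
    then show ?thesis using N ws unfolding lie_ideal_iff by (blast intro: span_base)
  next
    case False
    then obtain p y where x: "x = mul p y" and y: "y \<in> N" using x by (auto simp: multiples_def)
    have "br (y # ws) \<in> N" using N ws y unfolding lie_ideal_iff by blast
    then have "mul p (br (y # ws)) \<in> multiples N" "mul y (br (p # ws)) \<in> multiples N"
      using y mul_commute unfolding multiples_def by blast+
    then show ?thesis unfolding x bracket_mul_left[OF ws] by (intro span_add span_base) auto
  qed
qed

lemma lie_pow_span_multiples_subset:
  assumes N: "lie_ideal sc n br N"
  shows "lie_pow sc n br (span (N \<union> multiples N)) j \<subseteq> span {z. weighted N (j + 2) z}"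
proof (rule lie_pow_subset_filtration)
  have "x \<in> {z. weighted N 2 z}" if "x \<in> N \<union> multiples N" for x
    using that weighted_two weighted.product[OF weighted_one weighted_two]
    unfolding multiples_def by fastforce
  then show "span (N \<union> multiples N) \<subseteq> span {z. weighted N (0 + 2) z}"
    by (intro span_mono) (auto simp: numeral_2_eq_2)
  show "br (x # y # zs) \<in> span {z. weighted N (Suc j + 2) z}"
    if "x \<in> span {z. weighted N (j + 2) z}" "y \<in> span (N \<union> multiples N)" "length zs = n - 2"
    for j x y zs
    using bracket_weighted_Suc[OF N _ \<open>length zs = n - 2\<close>]
    by (intro bracket_first_two_in_subspace[OF subspace_span that]) simp
qed simp

lemma poisson_pow_subset_span_weighted:
  assumes N: "lie_ideal sc n br N"
  shows "poisson_pow sc n mul br N j \<subseteq> span {z. weighted N (j + 2) z}"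
proof (rule poisson_pow_subset_filtration)
  have "N \<subseteq> {z. weighted N 2 z}" using weighted_two by blast
  then show "N \<subseteq> span {z. weighted N (0 + 2) z}"
    using span_superset by (auto simp: numeral_2_eq_2)
  show "br (x # y # zs) \<in> span {z. weighted N (Suc j + 2) z}"
    if "x \<in> span {z. weighted N (j + 2) z}" "y \<in> N" "length zs = n - 2" for j x y zs
    using that(2) bracket_weighted_Suc[OF N _ that(3)]
    by (intro bracket_first_two_in_subspace[OF subspace_span that(1) span_base that(3)]) auto
  show "mul x y \<in> span {z. weighted N (Suc j + 2) z}"
    if "x \<in> span {z. weighted N (j + 2) z}" "y \<in> N" for j x y
    using mul_mem_span_weighted[OF that(1) weighted_two[OF that(2)]] by simp
qed simp

lemma is_Nil_if_is_nilradical: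
  assumes solvable: "poisson_solvable sc n mul br" and N: "is_nilradical sc n br N"
  shows "is_Nil sc n mul br N"
proof -
  obtain S where S: "derived_pow sc n mul br S = {0}"
    using solvable unfolding poisson_solvable_def by blast
  obtain s where ideal: "lie_ideal sc n br N" and s: "lie_pow sc n br N s = {0}"
    using N unfolding is_nilradical_def lie_nilpotent_ideal_def by blast
  let ?W = "2 ^ S * Suc s"
  have W: "span {z. weighted N (?W + 2) z} \<subseteq> {0}"
    by (rule span_weighted_eq_zero[OF s S]) simp
  have "lie_nilpotent_ideal sc n br (span (N \<union> multiples N))"
    using lie_pow_span_multiples_subset[OF ideal, of ?W] W
    by (intro lie_nilpotent_idealI[OF lie_ideal_span_multiples[OF ideal]]) blast
  then have "multiples N \<subseteq> N"
    using N span_superset unfolding is_nilradical_def by blast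
  then have "mul_sets sc mul UNIV N \<subseteq> N"
    using ideal unfolding mul_sets_def multiples_def lie_ideal_def by (intro span_minimal) auto
  then have "poisson_ideal sc n mul br N"
    using ideal unfolding poisson_ideal_def lie_ideal_def by blast
  moreover have "poisson_pow sc n mul br N ?W = {0}"
    using poisson_pow_subset_span_weighted[OF ideal, of ?W] W subspace_0[OF subspace_poisson_pow]
      ideal unfolding lie_ideal_def by blast
  ultimately have "poisson_nilpotent_ideal sc n mul br N"
    unfolding poisson_nilpotent_ideal_def by blast
  then show ?thesis
    using N lie_nilpotent_if_poisson_nilpotent unfolding is_Nil_def is_nilradical_def by blast
qed

end

theorem corollary5p11:
  fixes sc :: "'k::field_char_0 \<Rightarrow> 'v::ab_group_add \<Rightarrow> 'v"
    and n :: nat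
    and mul :: "'v \<Rightarrow> 'v \<Rightarrow> 'v"
    and br :: "'v list \<Rightarrow> 'v"
  assumes "alg_closed TYPE('k)"
    and "poisson_nlie sc n mul br"
    and "fin_dim_vs sc"
    and "poisson_solvable sc n mul br"
  shows "\<exists>N. is_Nil sc n mul br N \<and> is_nilradical sc n br N"
proof -
  interpret poisson_nlie_alg sc n mul br by (rule poisson_nlie_alg.intro) (rule assms(2))
  obtain B where "finite_dimensional_vector_space sc B"
    using assms(3) unfolding fin_dim_vs_def by blast
  then obtain N where "is_nilradical sc n br N" using lie_nilradical_exists by blast
  then show ?thesis using is_Nil_if_is_nilradical[OF assms(4)] by blast
qed

end
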